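(* Let $m$ be an integer and $n$ a positive integer. In $\mathbb Q\otimes\mathsf F$ one has $$\mathsf P_n=\sum_{i|n,\ j|n}c(i,j)\,\Psi^{n/i}(x_i)\,\Psi^{n/j}(y_j),\qquad c(i,j)=\frac{(1-m)\,ij}{n}\sum_{e\,|\,\frac{n}{[i,j]}}\Big[\frac{n}{ei}\Big]_m\Big[\frac{n}{ej}\Big]_m\mu_m(e),$$ where $[i,j]$ denotes the least common multiple of $i$ and $j$.
   Context: Let $\mathsf F$ be the free $\Psi$-ring on indeterminates $x_n,y_n$ ($n\ge1$); as a ring $\mathsf F=\mathbb Z[\Psi^k(x_n),\Psi^k(y_n):k,n\ge1]$, and $\Psi^k\Psi^l=\Psi^{kl}$, $\Psi^1=\mathrm{id}$, each $\Psi^k$ a unital ring endomorphism. For $k\ge1$, $[k]_m=1+m+\dots+m^{k-1}$. Define $\mathsf P_n\in\mathbb Q\otimes\mathsf F$ recursively by $\sum_{d|n}d[\frac nd]_m\Psi^{n/d}(\mathsf P_d)=(1-m)\big(\sum_{d|n}d[\frac nd]_m\Psi^{n/d}(x_d)\big)\big(\sum_{d|n}d[\frac nd]_m\Psi^{n/d}(y_d)\big)$ for all $n\ge1$. For a positive integer $e$, $\mu_m(e)=\sum_C \mathrm{wt}_m(C)$, the sum over all chains $C=(1=z_r\prec z_{r-1}\prec\cdots\prec z_0=e)$ ($r\ge0$) of positive integers where $a\prec b$ means $a\mid b$ and $a\neq b$, with $\mathrm{wt}_m(C)=(-1)^r[z_0/z_1]_m[z_1/z_2]_m\cdots[z_{r-1}/z_r]_m$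 (the empty product, for $r=0$ and $e=1$, equals $1$). *)

theory Defs
  imports Complex_Main "HOL-Library.Poly_Mapping"
begin

text \<open>Variables of the polynomial ring underlying the free Psi-ring.
  The variable (a, b, False) stands for Psi^(a+1)(x_(b+1)), and
  (a, b, True) stands for Psi^(a+1)(y_(b+1)).\<close>
type_synonym psivar = "nat \<times> nat \<times> bool"

text \<open>Q tensor F = Q[Psi^k(x_n), Psi^k(y_n) : k, n >= 1], realised as
  polynomials with rational coefficients in the variables above
  (monomials are finitely supported exponent vectors).\<close>
type_synonym QF = "(psivar \<Rightarrow>\<^sub>0 nat) \<Rightarrow>\<^sub>0 rat"

definition QF_const :: "rat \<Rightarrow> QF" where
  "QF_const c = Poly_Mapping.single 0 c"

definition QF_var :: "psivar \<Rightarrow> QF" where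
  "QF_var v = Poly_Mapping.single (Poly_Mapping.single v 1) 1"

definition QF_subst :: "(psivar \<Rightarrow> QF) \<Rightarrow> QF \<Rightarrow> QF" where
  "QF_subst \<sigma> p =
     (\<Sum>mo\<in>Poly_Mapping.keys p.
        QF_const (Poly_Mapping.lookup p mo) *
        (\<Prod>v\<in>Poly_Mapping.keys mo. \<sigma> v ^ Poly_Mapping.lookup mo v))"

text \<open>The Adams operation Psi^k (k >= 1): the ring endomorphism sending
  Psi^l(x_n) to Psi^(kl)(x_n) and Psi^l(y_n) to Psi^(kl)(y_n).\<close>
definition Psi :: "nat \<Rightarrow> QF \<Rightarrow> QF" where
  "Psi k = QF_subst (\<lambda>(a, b, c). QF_var (k * (a + 1) - 1, b, c))"

definition xv :: "nat \<Rightarrow> QF" where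
  "xv n = QF_var (0, n - 1, False)"

definition yv :: "nat \<Rightarrow> QF" where
  "yv n = QF_var (0, n - 1, True)"

definition qint :: "nat \<Rightarrow> int \<Rightarrow> int" where
  "qint k m = (\<Sum>i<k. m ^ i)"

definition div_chains :: "nat \<Rightarrow> nat list set" where
  "div_chains e = {zs. zs \<noteq> [] \<and> hd zs = e \<and> last zs = 1 \<and>
      (\<forall>i. Suc i < length zs \<longrightarrow> zs ! Suc i dvd zs ! i \<and> zs ! Suc i \<noteq> zs ! i)}"

definition chain_wt :: "int \<Rightarrow> nat list \<Rightarrow> int" where
  "chain_wt m zs = (-1) ^ (length zs - 1) *
      (\<Prod>i<length zs - 1. qint (zs ! i div zs ! Suc i) m)"

definition mu_m :: "int \<Rightarrow> nat \<Rightarrow> int" where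
  "mu_m m e = (\<Sum>zs\<in>div_chains e. chain_wt m zs)"

definition coef_c :: "int \<Rightarrow> nat \<Rightarrow> nat \<Rightarrow> nat \<Rightarrow> rat" where
  "coef_c m n i j = of_int (1 - m) * of_nat (i * j) / of_nat n *
     of_int (\<Sum>e\<in>{e. e dvd n div lcm i j}.
               qint (n div (e * i)) m * qint (n div (e * j)) m * mu_m m e)"

definition P_rec :: "int \<Rightarrow> (nat \<Rightarrow> QF) \<Rightarrow> nat \<Rightarrow> bool" where
  "P_rec m P n \<longleftrightarrow>
     (\<Sum>d\<in>{d. d dvd n}. of_int (int d * qint (n div d) m) * Psi (n div d) (P d)) =
     of_int (1 - m) *
       (\<Sum>d\<in>{d. d dvd n}. of_int (int d * qint (n div d) m) * Psi (n div d) (xv d)) *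
       (\<Sum>d\<in>{d. d dvd n}. of_int (int d * qint (n div d) m) * Psi (n div d) (yv d))"

end

theory Submission
  imports Defs
begin

text \<open>In the defining recursion the term with d = n is n [1]_m P_n = n P_n, so the
  recursion determines P_n from the P_d with d a proper divisor of n; it therefore suffices to
  check that the proposed closed form satisfies the recursion. Since Psi^k Psi^l = Psi^(kl), the
  left-hand side of the recursion for the closed form is a combination of the monomials
  Psi^(n/i)(x_i) Psi^(n/j)(y_j), and comparing coefficients reduces the claim to the identity
  sum over [i,j] | d | n of d [n/d]_m c_d(i,j) = (1 - m) i j [n/i]_m [n/j]_m.
  Writing d = [i,j] t and h(s) = [a s]_m [b s]_m with a = [i,j]/i, b = [i,j]/j, this is the
  inversion formula sum over t | N of [N/t]_m sum over e | t of h(t/e) mu_m(e) = h(N), which holds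
  because the chain recursion makes mu_m the Dirichlet inverse of e \<mapsto> [e]_m.\<close>

section \<open>The chain function mu_m as a Dirichlet inverse\<close>

lemma div_chains_1: "div_chains 1 = {[1]}"
proof
  show "div_chains 1 \<subseteq> {[1]}"
  proof
    fix zs assume zs_chain: "zs \<in> div_chains 1"
    then obtain ws where zs: "zs = 1 # ws"
      unfolding div_chains_def by (cases zs) auto
    have "ws = []"
    proof (rule ccontr)
      assume "ws \<noteq> []"
      with zs_chain zs have "zs ! 1 dvd zs ! 0" "zs ! 1 \<noteq> zs ! 0"
        unfolding div_chains_def by auto
      then show False using zs by simp
    qed
    then show "zs \<in> {[1]}" using zs by simp
  qed
  show "{[1]} \<subseteq> div_chains 1" unfolding div_chains_def by auto
qed

lemma div_chains_rec:
  assumes "e > 1"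
  shows "div_chains e = (\<Union>d\<in>{d. d dvd e} - {e}. Cons e ` div_chains d)"
proof
  show "div_chains e \<subseteq> (\<Union>d\<in>{d. d dvd e} - {e}. Cons e ` div_chains d)"
  proof
    fix zs assume zs_chain: "zs \<in> div_chains e"
    then obtain ws where zs: "zs = e # ws"
      unfolding div_chains_def by (cases zs) auto
    have "ws \<noteq> []" using zs_chain zs assms unfolding div_chains_def by auto
    have steps: "\<And>i. Suc i < length zs \<Longrightarrow> zs ! Suc i dvd zs ! i \<and> zs ! Suc i \<noteq> zs ! i"
      using zs_chain unfolding div_chains_def by auto
    from steps[of 0] have "hd ws dvd e" "hd ws \<noteq> e"
      using \<open>ws \<noteq> []\<close> zs by (auto simp: hd_conv_nth)
    moreover have "ws \<in> div_chains (hd ws)"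
      using zs_chain zs steps \<open>ws \<noteq> []\<close> unfolding div_chains_def by force
    ultimately show "zs \<in> (\<Union>d\<in>{d. d dvd e} - {e}. Cons e ` div_chains d)"
      using zs by auto
  qed
  show "(\<Union>d\<in>{d. d dvd e} - {e}. Cons e ` div_chains d) \<subseteq> div_chains e"
  proof
    fix zs assume "zs \<in> (\<Union>d\<in>{d. d dvd e} - {e}. Cons e ` div_chains d)"
    then obtain d ws where d: "d dvd e" "d \<noteq> e" and ws: "ws \<in> div_chains d"
      and zs: "zs = e # ws"
      by auto
    have ws_props: "ws \<noteq> []" "hd ws = d" "last ws = 1"
      and steps: "\<And>i. Suc i < length ws \<Longrightarrow> ws ! Suc i dvd ws ! i \<and> ws ! Suc i \<noteq> ws ! i"
      using ws unfolding div_chains_def by auto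
    have "zs ! Suc i dvd zs ! i \<and> zs ! Suc i \<noteq> zs ! i" if "Suc i < length zs" for i
      using that zs d ws_props steps[of "i - 1"] by (cases i) (auto simp: hd_conv_nth)
    then show "zs \<in> div_chains e"
      using zs ws_props unfolding div_chains_def by auto
  qed
qed

lemma finite_div_chains: "e \<ge> 1 \<Longrightarrow> finite (div_chains e)"
proof (induction e rule: less_induct)
  case (less e)
  show ?case
  proof (cases "e = 1")
    case True
    then show ?thesis by (simp add: div_chains_1[unfolded One_nat_def])
  next
    case False
    then have "e > 1" using less.prems by simp
    have "finite (div_chains d)" if "d \<in> {d. d dvd e} - {e}" for d
    proof (rule less.IH)
      from that have "d dvd e" "d \<noteq> e" by auto
      with \<open>e > 1\<close> show "d < e" "d \<ge> 1"
        using dvd_imp_le[of d e] dvd_pos_nat[of e d] by auto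
    qed
    moreover have "finite ({d. d dvd e} - {e})" using \<open>e > 1\<close> by simp
    ultimately show ?thesis by (simp add: div_chains_rec[OF \<open>e > 1\<close>])
  qed
qed

lemma chain_wt_Cons:
  assumes "ws \<noteq> []"
  shows "chain_wt m (e # ws) = - qint (e div hd ws) m * chain_wt m ws"
proof -
  obtain k where k: "length ws = Suc k" using assms by (cases ws) auto
  have "chain_wt m (e # ws) =
      (-1) ^ Suc k * (\<Prod>i<Suc k. qint ((e # ws) ! i div (e # ws) ! Suc i) m)"
    unfolding chain_wt_def using k by simp
  also have "\<dots> = (-1) ^ Suc k * (qint (e div ws ! 0) m * (\<Prod>i<k. qint (ws ! i div ws ! Suc i) m))"
    unfolding prod.lessThan_Suc_shift by simp
  also have "\<dots> = - qint (e div hd ws) m * chain_wt m ws"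
    unfolding chain_wt_def using k assms by (simp add: hd_conv_nth)
  finally show ?thesis .
qed

lemma qint_1 [simp]: "qint (Suc 0) m = 1"
  by (simp add: qint_def)

lemma mu_m_1 [simp]: "mu_m m (Suc 0) = 1"
  by (simp add: mu_m_def div_chains_1[unfolded One_nat_def] chain_wt_def)

lemma mu_m_rec:
  assumes "e > 1"
  shows "mu_m m e = - (\<Sum>d\<in>{d. d dvd e} - {e}. qint (e div d) m * mu_m m d)"
proof -
  have pos: "d \<ge> 1" if "d \<in> {d. d dvd e} - {e}" for d
    using that assms by (auto intro: dvd_pos_nat[rotated])
  have "mu_m m e = (\<Sum>zs\<in>(\<Union>d\<in>{d. d dvd e} - {e}. Cons e ` div_chains d). chain_wt m zs)"
    unfolding mu_m_def div_chains_rec[OF assms] ..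
  also have "\<dots> = (\<Sum>d\<in>{d. d dvd e} - {e}. \<Sum>zs\<in>Cons e ` div_chains d. chain_wt m zs)"
    using assms pos finite_div_chains by (intro sum.UNION_disjoint) (auto simp: div_chains_def)
  also have "\<dots> = (\<Sum>d\<in>{d. d dvd e} - {e}. \<Sum>ws\<in>div_chains d. chain_wt m (e # ws))"
    by (simp add: sum.reindex)
  also have "\<dots> = (\<Sum>d\<in>{d. d dvd e} - {e}. \<Sum>ws\<in>div_chains d. - qint (e div d) m * chain_wt m ws)"
    by (intro sum.cong refl, subst chain_wt_Cons) (auto simp: div_chains_def)
  also have "\<dots> = - (\<Sum>d\<in>{d. d dvd e} - {e}. qint (e div d) m * mu_m m d)"
    by (simp add: mu_m_def sum_distrib_left sum_negf)
  finally show ?thesis .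
qed

lemma sum_divisors_mu_m_qint:
  assumes "M \<ge> 1"
  shows "(\<Sum>e\<in>{e. e dvd M}. mu_m m e * qint (M div e) m) = (if M = 1 then 1 else 0)"
proof (cases "M = 1")
  case False
  then have "M > 1" using assms by simp
  then have "(\<Sum>e\<in>{e. e dvd M}. mu_m m e * qint (M div e) m) =
      mu_m m M + (\<Sum>e\<in>{e. e dvd M} - {M}. mu_m m e * qint (M div e) m)"
    by (subst sum.remove[of _ M]) auto
  also have "\<dots> = 0"
    using \<open>M > 1\<close> by (simp add: mu_m_rec mult.commute)
  finally show ?thesis using False by simp
qed simp

lemma sum_divisors_divisors_reindex:
  fixes F :: "nat \<Rightarrow> nat \<Rightarrow> 'a :: comm_monoid_add"
  assumes "N > 0"
  shows "(\<Sum>t\<in>{t. t dvd N}. \<Sum>e\<in>{e. e dvd t}. F t e) =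
         (\<Sum>s\<in>{s. s dvd N}. \<Sum>e\<in>{e. e dvd N div s}. F (s * e) e)"
proof -
  have "(\<Sum>t\<in>{t. t dvd N}. \<Sum>e\<in>{e. e dvd t}. F t e) =
      (\<Sum>(t, e)\<in>(SIGMA t:{t. t dvd N}. {e. e dvd t}). F t e)"
    using assms by (subst sum.Sigma) (auto intro: dvd_pos_nat[rotated])
  also have "\<dots> = (\<Sum>(s, e)\<in>(SIGMA s:{s. s dvd N}. {e. e dvd N div s}). F (s * e) e)"
  proof (rule sum.reindex_bij_witness[where i = "\<lambda>(s, e). (s * e, e)" and j = "\<lambda>(t, e). (t div e, e)"])
    fix a assume "a \<in> (SIGMA t:{t. t dvd N}. {e. e dvd t})"
    then obtain t e where a: "a = (t, e)" and "t dvd N" "e dvd t"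
      by auto
    then obtain s k where t: "t = e * s" and "N = t * k" by (auto elim!: dvdE)
    then have N: "N = s * (e * k)" by (simp add: ac_simps)
    note a = a[unfolded t]
    have "e > 0" using N assms by (cases "e = 0") auto
    then have "N div s = e * k" "e * s div e = s" using N assms by auto
    then show "(case (case a of (t, e) \<Rightarrow> (t div e, e)) of (s, e) \<Rightarrow> (s * e, e)) = a"
      and "(case a of (t, e) \<Rightarrow> (t div e, e)) \<in> (SIGMA s:{s. s dvd N}. {e. e dvd N div s})"
      using a N by (simp_all add: mult.commute)
  next
    fix b assume "b \<in> (SIGMA s:{s. s dvd N}. {e. e dvd N div s})"
    then obtain s e where b: "b = (s, e)" and s: "s dvd N" and "e dvd N div s"
      by auto
    then obtain k where k: "N div s = e * k" by (auto elim: dvdE)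
    have N: "N = s * e * k" using s k by (metis dvd_mult_div_cancel mult.assoc)
    then have "e > 0" using assms by (cases "e = 0") auto
    then show "(case (case b of (s, e) \<Rightarrow> (s * e, e)) of (t, e) \<Rightarrow> (t div e, e)) = b"
      and "(case b of (s, e) \<Rightarrow> (s * e, e)) \<in> (SIGMA t:{t. t dvd N}. {e. e dvd t})"
      using b N by simp_all
  qed (auto simp: split_def)
  also have "\<dots> = (\<Sum>s\<in>{s. s dvd N}. \<Sum>e\<in>{e. e dvd N div s}. F (s * e) e)"
    using assms by (subst sum.Sigma)
      (auto intro: dvd_pos_nat[rotated] simp: div_greater_zero_iff dvd_imp_le)
  finally show ?thesis .
qed

lemma qint_mu_m_inversion:
  fixes h :: "nat \<Rightarrow> int"
  assumes "N > 0"
  shows "(\<Sum>t\<in>{t. t dvd N}. qint (N div t) m * (\<Sum>e\<in>{e. e dvd t}. h (t div e) * mu_m m e)) = h N"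
proof -
  have div_ge1: "N div s \<ge> 1" if "s dvd N" for s
    using that assms dvd_pos_nat[OF assms that] by (simp add: Suc_le_eq div_greater_zero_iff dvd_imp_le)
  have "(\<Sum>t\<in>{t. t dvd N}. qint (N div t) m * (\<Sum>e\<in>{e. e dvd t}. h (t div e) * mu_m m e))
      = (\<Sum>s\<in>{s. s dvd N}. \<Sum>e\<in>{e. e dvd N div s}. qint (N div (s * e)) m * (h (s * e div e) * mu_m m e))"
    using assms by (simp add: sum_distrib_left sum_divisors_divisors_reindex)
  also have "\<dots> = (\<Sum>s\<in>{s. s dvd N}. \<Sum>e\<in>{e. e dvd N div s}. h s * (mu_m m e * qint (N div s div e) m))"
  proof (intro sum.cong refl)
    fix s e assume "s \<in> {s. s dvd N}" "e \<in> {e. e dvd N div s}"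
    then have "e > 0" using dvd_pos_nat[of "N div s" e] div_ge1[of s] by simp
    then show "qint (N div (s * e)) m * (h (s * e div e) * mu_m m e) =
        h s * (mu_m m e * qint (N div s div e) m)"
      by (simp add: div_mult2_eq)
  qed
  also have "\<dots> = (\<Sum>s\<in>{s. s dvd N}. if s = N then h s else 0)"
    unfolding sum_distrib_left[symmetric]
  proof (intro sum.cong refl)
    fix s assume "s \<in> {s. s dvd N}"
    then have "N div s = 1 \<longleftrightarrow> s = N"
      using assms by (auto elim!: dvdE)
    then show "h s * (\<Sum>e\<in>{e. e dvd N div s}. mu_m m e * qint (N div s div e) m) =
        (if s = N then h s else 0)"
      using div_ge1 \<open>s \<in> {s. s dvd N}\<close> by (simp add: sum_divisors_mu_m_qint)
  qed
  also have "\<dots> = h N" using assms by (simp add: sum.delta)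
  finally show ?thesis .
qed

section \<open>The coefficient identity\<close>

lemma sum_common_multiples_qint_mu_m:
  assumes "n \<ge> 1" and "i dvd n" and "j dvd n"
  shows "(\<Sum>d\<in>{d. d dvd n \<and> i dvd d \<and> j dvd d}. qint (n div d) m *
            (\<Sum>e\<in>{e. e dvd d div lcm i j}. qint (d div (e * i)) m * qint (d div (e * j)) m * mu_m m e))
         = qint (n div i) m * qint (n div j) m"
proof -
  define L where "L = lcm i j"
  define N where "N = n div L"
  define a where "a = L div i"
  define b where "b = L div j"
  define h where "h = (\<lambda>s. qint (a * s) m * qint (b * s) m)"
  have "i > 0" "j > 0"
    using assms dvd_pos_nat[of n i] dvd_pos_nat[of n j] by auto
  then have "L > 0" by (simp add: L_def lcm_pos_nat)
  have La: "L = i * a" and Lb: "L = j * b" by (simp_all add: L_def a_def b_def)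
  have nLN: "n = L * N" using assms by (simp add: L_def N_def)
  then have "N > 0" using assms by (cases "N = 0") auto
  have common_multiples: "{d. d dvd n \<and> i dvd d \<and> j dvd d} = (\<lambda>t. L * t) ` {t. t dvd N}"
  proof (intro set_eqI iffI)
    fix d assume "d \<in> {d. d dvd n \<and> i dvd d \<and> j dvd d}"
    then have "d dvd n" "L dvd d" by (auto simp: L_def)
    then obtain t where "d = L * t" "t dvd N"
      using nLN \<open>L > 0\<close> by (auto elim!: dvdE)
    then show "d \<in> (\<lambda>t. L * t) ` {t. t dvd N}" by auto
  next
    fix d assume "d \<in> (\<lambda>t. L * t) ` {t. t dvd N}"
    moreover have "i dvd L" "j dvd L" by (simp_all add: L_def)
    ultimately show "d \<in> {d. d dvd n \<and> i dvd d \<and> j dvd d}"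
      using nLN by (auto intro: dvd_trans)
  qed
  have summand: "qint (L * t div (e * i)) m * qint (L * t div (e * j)) m = h (t div e)"
    if "e dvd t" "t dvd N" for e t
  proof -
    obtain s where t: "t = e * s" using \<open>e dvd t\<close> by (auto elim: dvdE)
    have "e > 0" using t \<open>t dvd N\<close> \<open>N > 0\<close> by (cases "e = 0") auto
    have Lti: "L * t = (e * i) * (a * s)" and Ltj: "L * t = (e * j) * (b * s)"
      using t La Lb by (simp_all add: ac_simps)
    have "L * t div (e * i) = a * s" unfolding Lti using \<open>e > 0\<close> \<open>i > 0\<close> by simp
    moreover have "L * t div (e * j) = b * s" unfolding Ltj using \<open>e > 0\<close> \<open>j > 0\<close> by simp
    moreover have "t div e = s" using t \<open>e > 0\<close> by simp
    ultimately show ?thesis by (simp add: h_def)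
  qed
  have "(\<Sum>d\<in>{d. d dvd n \<and> i dvd d \<and> j dvd d}. qint (n div d) m *
            (\<Sum>e\<in>{e. e dvd d div L}. qint (d div (e * i)) m * qint (d div (e * j)) m * mu_m m e))
      = (\<Sum>t\<in>{t. t dvd N}. qint (n div (L * t)) m *
            (\<Sum>e\<in>{e. e dvd L * t div L}. qint (L * t div (e * i)) m * qint (L * t div (e * j)) m * mu_m m e))"
    unfolding common_multiples using \<open>L > 0\<close> by (simp add: sum.reindex inj_on_def)
  also have "\<dots> = (\<Sum>t\<in>{t. t dvd N}. qint (N div t) m * (\<Sum>e\<in>{e. e dvd t}. h (t div e) * mu_m m e))"
    using \<open>L > 0\<close> nLN summand by (intro sum.cong refl arg_cong2[where f = "(*)"]) simp_all
  also have "\<dots> = h N"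
    using \<open>N > 0\<close> by (rule qint_mu_m_inversion)
  also have "\<dots> = qint (n div i) m * qint (n div j) m"
  proof -
    have "n = i * (a * N)" using nLN La by simp
    then have "n div i = a * N" using \<open>i > 0\<close> by simp
    moreover have "n = j * (b * N)" using nLN Lb by simp
    then have "n div j = b * N" using \<open>j > 0\<close> by simp
    ultimately show ?thesis by (simp add: h_def)
  qed
  finally show ?thesis unfolding L_def .
qed

lemma sum_common_multiples_coef_c:
  assumes "n \<ge> 1" and "i dvd n" and "j dvd n"
  shows "(\<Sum>d\<in>{d. d dvd n \<and> i dvd d \<and> j dvd d}. of_int (int d * qint (n div d) m) * coef_c m d i j)
     = of_int (1 - m) * of_int (int i * qint (n div i) m) * of_int (int j * qint (n div j) m)"
proof -
  define S where "S d = (\<Sum>e\<in>{e. e dvd d div lcm i j}.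
      qint (d div (e * i)) m * qint (d div (e * j)) m * mu_m m e)" for d
  have "of_int (int d * qint (n div d) m) * coef_c m d i j
        = of_int (1 - m) * of_nat (i * j) * of_int (qint (n div d) m * S d)"
    if "d \<in> {d. d dvd n \<and> i dvd d \<and> j dvd d}" for d
  proof -
    have "d > 0" using that assms dvd_pos_nat[of n d] by auto
    then show ?thesis unfolding coef_c_def S_def by (simp add: field_simps)
  qed
  then have "(\<Sum>d\<in>{d. d dvd n \<and> i dvd d \<and> j dvd d}. of_int (int d * qint (n div d) m) * coef_c m d i j)
      = (\<Sum>d\<in>{d. d dvd n \<and> i dvd d \<and> j dvd d}. of_int (1 - m) * of_nat (i * j) * of_int (qint (n div d) m * S d))"
    by (rule sum.cong[OF refl])
  also have "\<dots> = of_int (1 - m) * of_nat (i * j) *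
      of_int (\<Sum>d\<in>{d. d dvd n \<and> i dvd d \<and> j dvd d}. qint (n div d) m * S d)"
    by (simp add: sum_distrib_left)
  also have "(\<Sum>d\<in>{d. d dvd n \<and> i dvd d \<and> j dvd d}. qint (n div d) m * S d) =
      qint (n div i) m * qint (n div j) m"
    unfolding S_def using assms by (rule sum_common_multiples_qint_mu_m)
  finally show ?thesis by simp
qed

section \<open>Substitution and the Adams operations on Q tensor F\<close>

definition QF_monomial_eval :: "(psivar \<Rightarrow> QF) \<Rightarrow> (psivar \<Rightarrow>\<^sub>0 nat) \<Rightarrow> QF" where
  "QF_monomial_eval \<sigma> mo = (\<Prod>v\<in>Poly_Mapping.keys mo. \<sigma> v ^ Poly_Mapping.lookup mo v)"

lemma QF_const_1: "QF_const 1 = 1"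
  by (simp add: QF_const_def)

lemma QF_const_add: "QF_const (a + b) = QF_const a + QF_const b"
  by (simp add: QF_const_def single_add)

lemma QF_const_mult: "QF_const (a * b) = QF_const a * QF_const b"
  by (simp add: QF_const_def mult_single)

lemma of_int_eq_QF_const: "(of_int k :: QF) = QF_const (of_int k)"
  by (simp add: QF_const_def)

lemma QF_const_sum: "QF_const (sum f A) = (\<Sum>x\<in>A. QF_const (f x))"
  by (induction A rule: infinite_finite_induct) (auto simp: QF_const_def single_add)

lemma QF_subst_eq_sum_superset:
  assumes "finite S" "Poly_Mapping.keys p \<subseteq> S"
  shows "QF_subst \<sigma> p = (\<Sum>mo\<in>S. QF_const (Poly_Mapping.lookup p mo) * QF_monomial_eval \<sigma> mo)"
  unfolding QF_subst_def QF_monomial_eval_def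
  by (rule sum.mono_neutral_left) (use assms in \<open>auto simp: in_keys_iff QF_const_def\<close>)

lemma QF_subst_add: "QF_subst \<sigma> (p + q) = QF_subst \<sigma> p + QF_subst \<sigma> q"
proof -
  let ?S = "Poly_Mapping.keys p \<union> Poly_Mapping.keys q"
  have "Poly_Mapping.keys (p + q) \<subseteq> ?S" by (rule keys_add)
  then show ?thesis
    by (simp add: QF_subst_eq_sum_superset[of ?S] lookup_add QF_const_add distrib_right sum.distrib)
qed

lemma QF_subst_0: "QF_subst \<sigma> 0 = 0"
  by (simp add: QF_subst_def)

lemma QF_subst_sum: "QF_subst \<sigma> (sum f A) = (\<Sum>x\<in>A. QF_subst \<sigma> (f x))"
  by (induction A rule: infinite_finite_induct) (auto simp: QF_subst_add QF_subst_0)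

lemma QF_subst_single: "QF_subst \<sigma> (Poly_Mapping.single mo c) = QF_const c * QF_monomial_eval \<sigma> mo"
  by (subst QF_subst_eq_sum_superset[of "{mo}"]) auto

lemma QF_subst_var: "QF_subst \<sigma> (QF_var v) = \<sigma> v"
  by (simp add: QF_var_def QF_subst_single QF_monomial_eval_def QF_const_def)

lemma QF_subst_const_var_var:
  assumes "v \<noteq> w"
  shows "QF_subst \<sigma> (QF_const c * QF_var v * QF_var w) = QF_const c * \<sigma> v * \<sigma> w"
proof -
  let ?mo = "Poly_Mapping.single v 1 + Poly_Mapping.single w (1::nat)"
  have "QF_const c * QF_var v * QF_var w = Poly_Mapping.single ?mo c"
    by (simp add: QF_const_def QF_var_def mult_single)
  moreover have "Poly_Mapping.keys ?mo = {v, w}"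
    using assms by (auto simp: in_keys_iff lookup_add lookup_single when_def split: if_splits)
  then have "QF_monomial_eval \<sigma> ?mo = \<sigma> v * \<sigma> w"
    unfolding QF_monomial_eval_def using assms by (simp add: lookup_add lookup_single when_def)
  ultimately show ?thesis by (simp add: QF_subst_single mult.assoc)
qed

lemma QF_var_power: "QF_var v ^ k = Poly_Mapping.single (Poly_Mapping.single v k) 1"
  by (induction k) (simp_all add: QF_var_def mult_single single_add[symmetric])

lemma QF_monomial_eval_QF_var: "QF_monomial_eval QF_var mo = Poly_Mapping.single mo 1"
proof -
  have "(\<Prod>v\<in>A. Poly_Mapping.single (f v) (1::rat)) = Poly_Mapping.single (\<Sum>v\<in>A. f v) 1"
    for A and f :: "psivar \<Rightarrow> psivar \<Rightarrow>\<^sub>0 nat"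
    by (induction A rule: infinite_finite_induct) (auto simp: mult_single)
  moreover have "(\<Sum>v\<in>Poly_Mapping.keys mo. Poly_Mapping.single v (Poly_Mapping.lookup mo v)) = mo"
    by (rule poly_mapping_eqI) (auto simp: lookup_sum lookup_single when_def in_keys_iff sum.delta)
  ultimately show ?thesis
    unfolding QF_monomial_eval_def QF_var_power by simp
qed

lemma QF_subst_QF_var: "QF_subst QF_var p = p"
proof -
  have "QF_subst QF_var p =
      (\<Sum>mo\<in>Poly_Mapping.keys p. Poly_Mapping.single mo (Poly_Mapping.lookup p mo))"
    unfolding QF_subst_def
    using QF_monomial_eval_QF_var[unfolded QF_monomial_eval_def]
    by (simp add: QF_const_def mult_single)
  also have "\<dots> = p"
    by (rule poly_mapping_eqI) (auto simp: lookup_sum lookup_single when_def in_keys_iff sum.delta)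
  finally show ?thesis .
qed

lemma Psi_1: "Psi 1 p = p"
proof -
  have "(\<lambda>(a, b, c). QF_var (1 * (a + 1) - 1, b, c)) = QF_var" by auto
  then show ?thesis unfolding Psi_def by (simp add: QF_subst_QF_var)
qed

lemma Psi_sum: "Psi k (sum f A) = (\<Sum>x\<in>A. Psi k (f x))"
  unfolding Psi_def by (rule QF_subst_sum)

lemma Psi_QF_var: "Psi k (QF_var (a, b, c)) = QF_var (k * (a + 1) - 1, b, c)"
  unfolding Psi_def by (simp add: QF_subst_var)

definition psi_x :: "nat \<Rightarrow> nat \<Rightarrow> QF" where
  "psi_x k i = QF_var (k - 1, i - 1, False)"

definition psi_y :: "nat \<Rightarrow> nat \<Rightarrow> QF" where
  "psi_y k i = QF_var (k - 1, i - 1, True)"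

lemma Psi_xv: "Psi k (xv i) = psi_x k i"
  by (simp add: xv_def psi_x_def Psi_QF_var)

lemma Psi_yv: "Psi k (yv i) = psi_y k i"
  by (simp add: yv_def psi_y_def Psi_QF_var)

lemma Psi_const_psi_x_psi_y:
  assumes "a \<ge> 1" "b \<ge> 1"
  shows "Psi k (QF_const c * psi_x a i * psi_y b j) = QF_const c * psi_x (k * a) i * psi_y (k * b) j"
proof -
  obtain a' b' where "a = Suc a'" "b = Suc b'" using assms by (cases a; cases b) simp_all
  then show ?thesis
    unfolding Psi_def psi_x_def psi_y_def by (subst QF_subst_const_var_var) (auto simp: QF_subst_var)
qed

section \<open>The closed form satisfies the recursion\<close>

definition P_closed :: "int \<Rightarrow> nat \<Rightarrow> QF" where
  "P_closed m n = (\<Sum>i\<in>{i. i dvd n}. \<Sum>j\<in>{j. j dvd n}.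
      QF_const (coef_c m n i j) * Psi (n div i) (xv i) * Psi (n div j) (yv j))"

lemma div_pos_if_dvd: "(i::nat) dvd n \<Longrightarrow> n > 0 \<Longrightarrow> n div i > 0"
  by (metis dvd_div_mult_self mult_0 neq0_conv)

lemma Psi_P_closed:
  assumes "d \<ge> 1"
  shows "Psi k (P_closed m d) = (\<Sum>i\<in>{i. i dvd d}. \<Sum>j\<in>{j. j dvd d}.
           QF_const (coef_c m d i j) * psi_x (k * (d div i)) i * psi_y (k * (d div j)) j)"
  unfolding P_closed_def Psi_xv Psi_yv Psi_sum
proof (intro sum.cong refl)
  fix i j assume "i \<in> {i. i dvd d}" and "j \<in> {j. j dvd d}"
  then have "d div i \<ge> 1" "d div j \<ge> 1"
    using assms div_pos_if_dvd[of i d] div_pos_if_dvd[of j d] by simp_all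
  then show "Psi k (QF_const (coef_c m d i j) * psi_x (d div i) i * psi_y (d div j) j) =
      QF_const (coef_c m d i j) * psi_x (k * (d div i)) i * psi_y (k * (d div j)) j"
    by (rule Psi_const_psi_x_psi_y)
qed

lemma sum_divisors_eq_sum_divisors_if:
  fixes d n :: nat
  assumes "d dvd n" "n \<ge> 1"
  shows "(\<Sum>i\<in>{i. i dvd d}. f i) = (\<Sum>i\<in>{i. i dvd n}. if i dvd d then f i else 0)"
proof -
  have divisors_d: "{i. i dvd d} = {i \<in> {i. i dvd n}. i dvd d}" using dvd_trans[OF _ assms(1)] by auto
  have "finite {i. i dvd n}" using assms(2) by simp
  then show ?thesis unfolding divisors_d by (rule sum.inter_filter)
qed

lemma const_mult_Psi_P_closed:
  assumes "d dvd n" "n \<ge> 1"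
  shows "QF_const c * Psi (n div d) (P_closed m d) =
    (\<Sum>i\<in>{i. i dvd n}. \<Sum>j\<in>{j. j dvd n}. if i dvd d \<and> j dvd d
        then QF_const (c * coef_c m d i j) * psi_x (n div i) i * psi_y (n div j) j else 0)"
proof -
  have "d \<ge> 1" using assms dvd_pos_nat[of n d] by simp
  have quotient: "n div d * (d div i) = n div i" if i_dvd_d: "i dvd d" for i
  proof -
    obtain l where d: "d = i * l" using i_dvd_d by (rule dvdE)
    obtain k where n: "n = d * k" using assms(1) by (rule dvdE)
    have "i > 0" "l > 0" using d \<open>d \<ge> 1\<close> by (simp_all add: Suc_le_eq)
    then show ?thesis using n d by (simp add: mult.assoc mult.commute[of k l])
  qed
  have "QF_const c * Psi (n div d) (P_closed m d) =
      QF_const c * (\<Sum>i\<in>{i. i dvd d}. \<Sum>j\<in>{j. j dvd d}.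
         QF_const (coef_c m d i j) * psi_x (n div i) i * psi_y (n div j) j)"
    unfolding Psi_P_closed[OF \<open>d \<ge> 1\<close>] by (intro arg_cong2[where f = "(*)"] refl sum.cong) (auto simp: quotient)
  also have "\<dots> = (\<Sum>i\<in>{i. i dvd d}. \<Sum>j\<in>{j. j dvd d}.
         QF_const (c * coef_c m d i j) * psi_x (n div i) i * psi_y (n div j) j)"
    by (simp add: sum_distrib_left QF_const_mult mult.assoc)
  also have "\<dots> = (\<Sum>i\<in>{i. i dvd n}. if i dvd d then (\<Sum>j\<in>{j. j dvd n}. if j dvd d
        then QF_const (c * coef_c m d i j) * psi_x (n div i) i * psi_y (n div j) j else 0) else 0)"
    using assms by (simp add: sum_divisors_eq_sum_divisors_if[of d n])
  also have "\<dots> = (\<Sum>i\<in>{i. i dvd n}. \<Sum>j\<in>{j. j dvd n}. if i dvd d \<and> j dvd d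
        then QF_const (c * coef_c m d i j) * psi_x (n div i) i * psi_y (n div j) j else 0)"
    by (intro sum.cong refl) simp
  finally show ?thesis .
qed

lemma P_rec_P_closed:
  assumes "n \<ge> 1"
  shows "P_rec m (P_closed m) n"
proof -
  define D where "D = {d. d dvd n}"
  define w where "w d = (of_int (int d * qint (n div d) m) :: rat)" for d
  define T where "T i j = psi_x (n div i) i * psi_y (n div j) j" for i j
  have "finite D" using assms by (simp add: D_def)
  have "(\<Sum>d\<in>D. of_int (int d * qint (n div d) m) * Psi (n div d) (P_closed m d)) =
      (\<Sum>d\<in>D. \<Sum>i\<in>D. \<Sum>j\<in>D. if i dvd d \<and> j dvd d then QF_const (w d * coef_c m d i j) * T i j else 0)"
  proof (intro sum.cong refl)
    fix d assume "d \<in> D"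
    then show "of_int (int d * qint (n div d) m) * Psi (n div d) (P_closed m d) =
      (\<Sum>i\<in>D. \<Sum>j\<in>D. if i dvd d \<and> j dvd d then QF_const (w d * coef_c m d i j) * T i j else 0)"
      using const_mult_Psi_P_closed[of d n "w d" m] assms
      unfolding D_def w_def T_def of_int_eq_QF_const mult.assoc by simp
  qed
  also have "\<dots> =
      (\<Sum>i\<in>D. \<Sum>j\<in>D. \<Sum>d\<in>D. if i dvd d \<and> j dvd d then QF_const (w d * coef_c m d i j) * T i j else 0)"
    by (subst sum.swap) (intro sum.cong refl sum.swap)
  also have "\<dots> = (\<Sum>i\<in>D. \<Sum>j\<in>D.
      QF_const (of_int (1 - m) * of_int (int i * qint (n div i) m) * of_int (int j * qint (n div j) m)) * T i j)"
  proof (intro sum.cong refl)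
    fix i j assume "i \<in> D" "j \<in> D"
    have "(\<Sum>d\<in>D. if i dvd d \<and> j dvd d then QF_const (w d * coef_c m d i j) * T i j else 0)
        = QF_const (\<Sum>d\<in>{d. d dvd n \<and> i dvd d \<and> j dvd d}. w d * coef_c m d i j) * T i j"
      using \<open>finite D\<close> by (simp add: sum.inter_filter[symmetric] D_def QF_const_sum sum_distrib_right)
    also have "\<dots> = QF_const (of_int (1 - m) * of_int (int i * qint (n div i) m) *
        of_int (int j * qint (n div j) m)) * T i j"
      using sum_common_multiples_coef_c[of n i j m] assms \<open>i \<in> D\<close> \<open>j \<in> D\<close>
      unfolding w_def D_def by simp
    finally show "(\<Sum>d\<in>D. if i dvd d \<and> j dvd d then QF_const (w d * coef_c m d i j) * T i j else 0)
        = QF_const (of_int (1 - m) * of_int (int i * qint (n div i) m) *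
            of_int (int j * qint (n div j) m)) * T i j" .
  qed
  also have "\<dots> = (\<Sum>i\<in>D. of_int (1 - m) * (of_int (int i * qint (n div i) m) * psi_x (n div i) i)) *
      (\<Sum>j\<in>D. of_int (int j * qint (n div j) m) * psi_y (n div j) j)"
    unfolding sum_product T_def
    by (intro sum.cong refl) (simp only: QF_const_mult of_int_eq_QF_const mult.assoc mult.left_commute)
  finally show ?thesis
    unfolding P_rec_def D_def Psi_xv Psi_yv by (simp only: sum_distrib_left)
qed

lemma P_rec_unique:
  assumes "\<And>k. k \<ge> 1 \<Longrightarrow> P_rec m P k" and "\<And>k. k \<ge> 1 \<Longrightarrow> P_rec m Q k"
    and "n \<ge> 1"
  shows "P n = Q n"
  using \<open>n \<ge> 1\<close>
proof (induction n rule: less_induct)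
  case (less n)
  define W where "W d = QF_const (of_int (int d * qint (n div d) m))" for d
  have split_top: "(\<Sum>d\<in>{d. d dvd n}. W d * Psi (n div d) (R d)) =
      W n * R n + (\<Sum>d\<in>{d. d dvd n} - {n}. W d * Psi (n div d) (R d))" for R
    using less.prems by (subst sum.remove[of _ n]) (auto simp: Psi_1[unfolded One_nat_def])
  have "P d = Q d" if "d \<in> {d. d dvd n} - {n}" for d
  proof (rule less.IH)
    from that have "d dvd n" "d \<noteq> n" by auto
    with less.prems show "d < n" "d \<ge> 1"
      using dvd_imp_le[of d n] dvd_pos_nat[of n d] by auto
  qed
  then have "(\<Sum>d\<in>{d. d dvd n} - {n}. W d * Psi (n div d) (P d)) =
      (\<Sum>d\<in>{d. d dvd n} - {n}. W d * Psi (n div d) (Q d))"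
    by simp
  moreover have "(\<Sum>d\<in>{d. d dvd n}. W d * Psi (n div d) (P d)) =
      (\<Sum>d\<in>{d. d dvd n}. W d * Psi (n div d) (Q d))"
    using assms(1,2)[OF less.prems] unfolding P_rec_def W_def of_int_eq_QF_const by simp
  ultimately have top_eq: "W n * P n = W n * Q n"
    unfolding split_top by simp
  have W_n_inverse: "QF_const (1 / of_nat n) * W n = 1"
    using less.prems by (simp add: W_def QF_const_mult[symmetric] QF_const_1)
  have "P n = QF_const (1 / of_nat n) * (W n * P n)"
    by (simp add: mult.assoc[symmetric] W_n_inverse)
  also have "\<dots> = Q n"
    by (simp add: top_eq mult.assoc[symmetric] W_n_inverse)
  finally show ?case .
qed

theorem proposition5p14:
  fixes m :: int and n :: nat and P :: "nat \<Rightarrow> QF"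
  assumes P_def: "\<And>k. k \<ge> 1 \<Longrightarrow> P_rec m P k"
    and n_pos: "n \<ge> 1"
  shows "P n = (\<Sum>i\<in>{i. i dvd n}. \<Sum>j\<in>{j. j dvd n}.
                  QF_const (coef_c m n i j) * Psi (n div i) (xv i) * Psi (n div j) (yv j))"
proof -
  have "P n = P_closed m n"
    using P_def P_rec_P_closed n_pos by (rule P_rec_unique)
  then show ?thesis unfolding P_closed_def .
qed

end
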